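(* Let $X$ be a compact sub-Stonean space, and regard $C(X)$ as a Hilbert $C(X)$-bimodule with left and right actions given by multiplication. A subset $\mathscr{S}$ of $C(X)$ is $C(X)$-convex if and only if $\mathscr{S}$ is pseudo $C(X)$-convex.
   Context: $C(X)$ is the $C^*$-algebra of complex-valued continuous functions on $X$. A subset $\mathscr{S}\subseteq C(X)$ is $C(X)$-convex if for every $n\in\mathbb{N}$, all $f_1,\dots,f_n\in\mathscr{S}$ and all $t_1,\dots,t_n\in C(X)$ with $\sum_{i=1}^n |t_i|^2 = 1$, the function $\sum_{i=1}^n \overline{t_i}f_it_i$ lies in $\mathscr{S}$; it is pseudo $C(X)$-convex if this holds for $n=2$, i.e. for all $f_1,f_2\in\mathscr{S}$ and $t_1,t_2\in C(X)$ with $|t_1|^2+|t_2|^2=1$, $\overline{t_1}f_1t_1+\overline{t_2}f_2t_2\in\mathscr{S}$. A compact Hausdorff space $X$ is sub-Stonean (in the sense of Grove and Pedersen) if any two disjoint open $\sigma$-compact subsets of $X$ have disjoint closures. *)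

theory Defs
  imports "HOL-Analysis.Analysis"
begin

text \<open>C(X) for X the (compact Hausdorff) space given by the type 'a.\<close>
definition CX :: "('a::topological_space \<Rightarrow> complex) set" where
  "CX = {f. continuous_on UNIV f}"

definition C_convex :: "('a::topological_space \<Rightarrow> complex) set \<Rightarrow> bool" where
  "C_convex S \<longleftrightarrow>
     (\<forall>(n::nat) (f::nat \<Rightarrow> 'a \<Rightarrow> complex) (t::nat \<Rightarrow> 'a \<Rightarrow> complex).
        (\<forall>i<n. f i \<in> S) \<and> (\<forall>i<n. t i \<in> CX) \<and>
        (\<forall>x. (\<Sum>i<n. (cmod (t i x))\<^sup>2) = 1)
        \<longrightarrow> (\<lambda>x. \<Sum>i<n. cnj (t i x) * f i x * t i x) \<in> S)"

definition pseudo_C_convex :: "('a::topological_space \<Rightarrow> complex) set \<Rightarrow> bool" where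
  "pseudo_C_convex S \<longleftrightarrow>
     (\<forall>f1 f2 t1 t2. f1 \<in> S \<and> f2 \<in> S \<and> t1 \<in> CX \<and> t2 \<in> CX \<and>
        (\<forall>x. (cmod (t1 x))\<^sup>2 + (cmod (t2 x))\<^sup>2 = 1)
        \<longrightarrow> (\<lambda>x. cnj (t1 x) * f1 x * t1 x + cnj (t2 x) * f2 x * t2 x) \<in> S)"

definition sigma_compact :: "'a::topological_space set \<Rightarrow> bool" where
  "sigma_compact U \<longleftrightarrow> (\<exists>K::nat \<Rightarrow> 'a set. (\<forall>n. compact (K n)) \<and> U = (\<Union>n. K n))"

text \<open>Sub-Stonean (Grove--Pedersen): compact Hausdorff (Hausdorff via the class t2_space)
  and disjoint open sigma-compact sets have disjoint closures.\<close>
definition sub_Stonean :: "'a::t2_space itself \<Rightarrow> bool" where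
  "sub_Stonean _ \<longleftrightarrow> compact (UNIV::'a set) \<and>
     (\<forall>U V::'a set. open U \<and> open V \<and> sigma_compact U \<and> sigma_compact V \<and> U \<inter> V = {}
        \<longrightarrow> closure U \<inter> closure V = {})"

end

theory Submission imports Defs begin

text \<open>Writing \<open>t\<^sub>i\<^sup>* f\<^sub>i t\<^sub>i = |t\<^sub>i|\<^sup>2 f\<^sub>i\<close>, a \<open>C(X)\<close>-convex combination is a combination
  \<open>\<Sum> w\<^sub>i f\<^sub>i\<close> with continuous weights \<open>w\<^sub>i \<ge> 0\<close> summing to 1, and conversely every such weight
  system arises from \<open>t\<^sub>i = \<surd>w\<^sub>i\<close>. Pseudo \<open>C(X)\<close>-convexity lets us merge two terms
  \<open>w\<^sub>1 f\<^sub>1 + w\<^sub>2 f\<^sub>2\<close> into \<open>(w\<^sub>1 + w\<^sub>2) (a f\<^sub>1 + (1 - a) f\<^sub>2)\<close>, provided there is a continuous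
  \<open>a : X \<rightarrow> [0,1]\<close> with \<open>a (w\<^sub>1 + w\<^sub>2) = w\<^sub>1\<close>; induction on the number of terms then finishes.
  Such an \<open>a\<close> is the quotient \<open>w\<^sub>1 / (w\<^sub>1 + w\<^sub>2)\<close> on the cozero set \<open>U\<close> of \<open>w\<^sub>1 + w\<^sub>2\<close>, extended
  continuously to \<open>closure U\<close> and then, by Tietze, to \<open>X\<close>. The extension to \<open>closure U\<close> is where
  sub-Stoneanness enters: the open \<open>\<sigma>\<close>-compact sets where the quotient is \<open>< \<alpha>\<close> resp. \<open>> \<beta>\<close>
  have disjoint closures whenever \<open>\<alpha> \<le> \<beta>\<close>, so each point of \<open>closure U\<close> determines a
  well-defined limiting value of the quotient.\<close>

lemma Hausdorff_space_euclidean_t2: "Hausdorff_space (euclidean :: 'a::t2_space topology)"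
  unfolding Hausdorff_space_def disjnt_def using separation_t2
  by (metis open_openin)

lemma sigma_compact_Collect_pos:
  fixes f :: "'a::topological_space \<Rightarrow> real"
  assumes "compact (UNIV::'a set)" and f: "continuous_on UNIV f"
  shows "sigma_compact {x. 0 < f x}"
proof -
  define K where "K n = {x. inverse (real (Suc n)) \<le> f x}" for n
  have "compact (K n)" for n
  proof -
    have "closed (K n)"
      unfolding K_def by (rule closed_Collect_le[OF continuous_on_const f])
    then show ?thesis using compact_Int_closed[OF assms(1)] by (metis inf_top.left_neutral)
  qed
  moreover have "{x. 0 < f x} = (\<Union>n. K n)"
  proof (intro set_eqI iffI)
    fix x assume "x \<in> {x. 0 < f x}"
    then obtain n where "inverse (real (Suc n)) < f x"
      using reals_Archimedean by auto
    then show "x \<in> (\<Union>n. K n)" unfolding K_def by (auto intro: less_imp_le)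
  next
    fix x assume "x \<in> (\<Union>n. K n)"
    then obtain n where "inverse (real (Suc n)) \<le> f x" unfolding K_def by blast
    moreover have "0 < inverse (real (Suc n))" by simp
    ultimately have "0 < f x" by linarith
    then show "x \<in> {x. 0 < f x}" by simp
  qed
  ultimately show ?thesis unfolding sigma_compact_def by blast
qed

lemma sub_Stonean_closure_cozero_disjoint:
  fixes u v :: "'a::t2_space \<Rightarrow> real"
  assumes sub: "sub_Stonean TYPE('a)"
    and u: "continuous_on UNIV u" and v: "continuous_on UNIV v"
    and disj: "\<And>x. \<not> (0 < u x \<and> 0 < v x)"
  shows "closure {x. 0 < u x} \<inter> closure {x. 0 < v x} = {}"
proof -
  have cU: "compact (UNIV::'a set)" using sub unfolding sub_Stonean_def by blast
  have "open {x. 0 < u x}" "open {x. 0 < v x}"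
    using open_Collect_less[OF continuous_on_const u] open_Collect_less[OF continuous_on_const v]
    by simp_all
  moreover have "sigma_compact {x. 0 < u x}" "sigma_compact {x. 0 < v x}"
    using sigma_compact_Collect_pos[OF cU u] sigma_compact_Collect_pos[OF cU v] .
  ultimately show ?thesis using sub disj unfolding sub_Stonean_def by blast
qed

locale sub_Stonean_ratio =
  fixes p s :: "'a::t2_space \<Rightarrow> real"
  assumes sub_Stonean: "sub_Stonean TYPE('a)"
    and cont_p: "continuous_on UNIV p" and cont_s: "continuous_on UNIV s"
    and p_nonneg: "\<And>x. 0 \<le> p x" and p_le_s: "\<And>x. p x \<le> s x"
begin

text \<open>\<open>below c\<close> and \<open>above c\<close> are the parts of \<open>cozero\<close> where \<open>p / s < c\<close> resp. \<open>p / s > c\<close>;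
  \<open>ratio_at x c\<close> says that \<open>c\<close> is the limiting value of \<open>p / s\<close> at a point \<open>x\<close> of \<open>closure cozero\<close>.\<close>

definition cozero :: "'a set" where "cozero = {x. 0 < s x}"

definition below :: "real \<Rightarrow> 'a set" where "below c = {x. 0 < s x \<and> p x < c * s x}"

definition above :: "real \<Rightarrow> 'a set" where "above c = {x. 0 < s x \<and> c * s x < p x}"

definition ratio_at :: "'a \<Rightarrow> real \<Rightarrow> bool" where
  "ratio_at x c \<longleftrightarrow> (\<forall>\<epsilon>>0. x \<notin> closure (above (c + \<epsilon>)) \<and> x \<notin> closure (below (c - \<epsilon>)))"

lemma closure_below_above_disjoint:
  assumes "\<alpha> \<le> \<beta>"
  shows "closure (below \<alpha>) \<inter> closure (above \<beta>) = {}"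
proof -
  have "below \<alpha> = {x. 0 < min (s x) (\<alpha> * s x - p x)}"
    "above \<beta> = {x. 0 < min (s x) (p x - \<beta> * s x)}"
    unfolding below_def above_def by auto
  moreover have "\<not> (0 < min (s x) (\<alpha> * s x - p x) \<and> 0 < min (s x) (p x - \<beta> * s x))" for x
  proof
    assume "0 < min (s x) (\<alpha> * s x - p x) \<and> 0 < min (s x) (p x - \<beta> * s x)"
    then have "0 < s x" "p x < \<alpha> * s x" "\<beta> * s x < p x" by auto
    moreover have "\<alpha> * s x \<le> \<beta> * s x" using assms \<open>0 < s x\<close> by (simp add: mult_right_mono)
    ultimately show False by linarith
  qed
  ultimately show ?thesis
    by (simp only:) (intro sub_Stonean_closure_cozero_disjoint sub_Stonean continuous_intros
        cont_p cont_s)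
qed

lemma closure_cozero_subset:
  assumes "a < b"
  shows "closure cozero \<subseteq> closure (above a) \<union> closure (below b)"
proof -
  have "cozero \<subseteq> above a \<union> below b"
  proof
    fix x assume "x \<in> cozero"
    then have "0 < s x" unfolding cozero_def by simp
    moreover have "a * s x < b * s x" using assms \<open>0 < s x\<close> by simp
    then have "a * s x < p x \<or> p x < b * s x" by linarith
    ultimately show "x \<in> above a \<union> below b"
      unfolding above_def below_def by auto
  qed
  then show ?thesis by (metis closure_Un closure_mono)
qed

lemma ratio_at_exists:
  assumes x: "x \<in> closure cozero"
  shows "\<exists>c\<in>{0..1}. ratio_at x c"
proof -
  define C where "C \<beta> = {y. 0 < s y \<and> \<beta> * s y \<le> p y}" for \<beta>
  define L where "L = {\<beta>. x \<in> closure (C \<beta>)}"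
  have "C 0 = cozero" unfolding C_def cozero_def using p_nonneg by auto
  then have L0: "0 \<in> L" unfolding L_def using x by simp
  have L1: "\<beta> \<le> 1" if "\<beta> \<in> L" for \<beta>
  proof (rule ccontr)
    assume "\<not> \<beta> \<le> 1"
    have "y \<notin> C \<beta>" for y
    proof
      assume "y \<in> C \<beta>"
      then have "0 < s y" "\<beta> * s y \<le> p y" unfolding C_def by auto
      moreover have "s y < \<beta> * s y" using \<open>\<not> \<beta> \<le> 1\<close> \<open>0 < s y\<close> by simp
      ultimately show False using p_le_s[of y] by linarith
    qed
    then have "C \<beta> = {}" by blast
    then show False using that unfolding L_def by simp
  qed
  have bdd: "bdd_above L" using L1 by (rule bdd_aboveI)
  define c where "c = Sup L"
  have "ratio_at x c" unfolding ratio_at_def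
  proof (intro allI impI conjI)
    fix \<epsilon> :: real assume "0 < \<epsilon>"
    show "x \<notin> closure (above (c + \<epsilon>))"
    proof
      assume "x \<in> closure (above (c + \<epsilon>))"
      moreover have "above (c + \<epsilon>) \<subseteq> C (c + \<epsilon>)" unfolding above_def C_def by auto
      ultimately have "c + \<epsilon> \<in> L" unfolding L_def using closure_mono by blast
      then have "c + \<epsilon> \<le> c" unfolding c_def using bdd by (rule cSup_upper)
      then show False using \<open>0 < \<epsilon>\<close> by simp
    qed
    show "x \<notin> closure (below (c - \<epsilon>))"
    proof
      assume x_below: "x \<in> closure (below (c - \<epsilon>))"
      obtain \<beta> where \<beta>: "\<beta> \<in> L" "c - \<epsilon>/2 < \<beta>"
        using less_cSupD[of L "c - \<epsilon>/2"] L0 \<open>0 < \<epsilon>\<close> unfolding c_def by auto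
      have "C \<beta> \<subseteq> above (c - \<epsilon>/2)"
      proof
        fix y assume "y \<in> C \<beta>"
        then have "0 < s y" "\<beta> * s y \<le> p y" unfolding C_def by auto
        moreover have "(c - \<epsilon>/2) * s y < \<beta> * s y" using \<beta>(2) \<open>0 < s y\<close> by simp
        ultimately have "(c - \<epsilon>/2) * s y < p y" by linarith
        with \<open>0 < s y\<close> show "y \<in> above (c - \<epsilon>/2)" unfolding above_def by simp
      qed
      then have "x \<in> closure (above (c - \<epsilon>/2))" using \<beta>(1) closure_mono unfolding L_def by blast
      moreover have "closure (below (c - \<epsilon>)) \<inter> closure (above (c - \<epsilon>/2)) = {}"
        using \<open>0 < \<epsilon>\<close> by (intro closure_below_above_disjoint) simp
      ultimately show False using x_below by blast
    qed
  qed
  moreover have "c \<in> {0..1}"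
    unfolding c_def using cSup_upper[OF L0 bdd] L0 L1 by (auto intro: cSup_least)
  ultimately show ?thesis by blast
qed

lemma ratio_at_close:
  assumes y: "y \<in> closure cozero" and "ratio_at y d" and "0 < \<epsilon>"
    and "y \<notin> closure (above (c + \<epsilon>))" and "y \<notin> closure (below (c - \<epsilon>))"
  shows "\<bar>d - c\<bar> \<le> 2 * \<epsilon>"
proof -
  have "\<not> c + \<epsilon> < d - \<epsilon>"
    using closure_cozero_subset[of "c + \<epsilon>" "d - \<epsilon>"] assms unfolding ratio_at_def by blast
  moreover have "\<not> d + \<epsilon> < c - \<epsilon>"
    using closure_cozero_subset[of "d + \<epsilon>" "c - \<epsilon>"] assms unfolding ratio_at_def by blast
  ultimately show ?thesis by linarith
qed

lemma ratio_at_cozero: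
  assumes "0 < s x" and "ratio_at x c"
  shows "c * s x = p x"
proof (rule ccontr)
  assume "c * s x \<noteq> p x"
  define \<epsilon> where "\<epsilon> = \<bar>p x - c * s x\<bar> / (2 * s x)"
  have "0 < \<epsilon>" using \<open>c * s x \<noteq> p x\<close> assms(1) unfolding \<epsilon>_def by simp
  have \<epsilon>_s: "\<epsilon> * s x = \<bar>p x - c * s x\<bar> / 2" using assms(1) unfolding \<epsilon>_def by simp
  have "(c + \<epsilon>) * s x < p x \<or> p x < (c - \<epsilon>) * s x"
  proof (cases "c * s x < p x")
    case True
    then have "\<epsilon> * s x = (p x - c * s x) / 2" using \<epsilon>_s by simp
    then have "(c + \<epsilon>) * s x < p x" using True by (simp add: distrib_right)
    then show ?thesis ..
  next
    case False
    then have "\<epsilon> * s x = (c * s x - p x) / 2" using \<epsilon>_s by simp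
    then have "p x < (c - \<epsilon>) * s x" using False \<open>c * s x \<noteq> p x\<close> by (simp add: left_diff_distrib)
    then show ?thesis ..
  qed
  then have "x \<in> above (c + \<epsilon>) \<or> x \<in> below (c - \<epsilon>)"
    using assms(1) unfolding above_def below_def by auto
  then show False using assms(2) \<open>0 < \<epsilon>\<close> closure_subset unfolding ratio_at_def by blast
qed

definition ratio :: "'a \<Rightarrow> real" where "ratio x = (SOME c. c \<in> {0..1} \<and> ratio_at x c)"

lemma ratio_spec:
  assumes "x \<in> closure cozero"
  shows "ratio x \<in> {0..1}" "ratio_at x (ratio x)"
  using someI_ex[OF ratio_at_exists[OF assms, unfolded Bex_def]] unfolding ratio_def by auto

lemma continuous_on_ratio: "continuous_on (closure cozero) ratio"
  unfolding continuous_on_topological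
proof (intro ballI allI impI)
  fix x V assume x: "x \<in> closure cozero" and "open V" "ratio x \<in> V"
  then obtain r where "0 < r" and r: "ball (ratio x) r \<subseteq> V" using open_contains_ball by blast
  define N where "N = - closure (above (ratio x + r/4)) \<inter> - closure (below (ratio x - r/4))"
  have "open N" unfolding N_def by (intro open_Int open_Compl closed_closure)
  moreover have "x \<in> N"
    using ratio_spec(2)[OF x] \<open>0 < r\<close> unfolding N_def ratio_at_def by simp
  moreover have "ratio y \<in> V" if "y \<in> closure cozero" "y \<in> N" for y
  proof -
    have "\<bar>ratio y - ratio x\<bar> \<le> 2 * (r/4)"
      using ratio_at_close[OF that(1) ratio_spec(2)[OF that(1)], of "r/4" "ratio x"] \<open>0 < r\<close> that(2)
      unfolding N_def by simp
    then show ?thesis using r \<open>0 < r\<close> by (auto simp: dist_real_def abs_minus_commute)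
  qed
  ultimately show "\<exists>A. open A \<and> x \<in> A \<and> (\<forall>y\<in>closure cozero. y \<in> A \<longrightarrow> ratio y \<in> V)"
    by blast
qed

lemma ratio_extension:
  obtains a where "continuous_on UNIV a" "\<And>x. a x \<in> {0..1}" "\<And>x. a x * s x = p x"
proof -
  have "compact (UNIV::'a set)" using sub_Stonean unfolding sub_Stonean_def by blast
  then have normal: "normal_space (euclidean :: 'a topology)"
    by (intro compact_Hausdorff_or_regular_imp_normal_space)
      (simp_all add: compact_space_def Hausdorff_space_euclidean_t2)
  have closed: "closedin euclidean (closure cozero)" using closed_closure closed_closedin by blast
  have cont: "continuous_map (subtopology euclidean (closure cozero)) euclideanreal ratio"
    unfolding continuous_map_iff_continuous by (rule continuous_on_ratio)
  have range: "ratio ` closure cozero \<subseteq> {0..1}" using ratio_spec(1) by blast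
  obtain a where a: "continuous_map euclidean euclideanreal a"
      "\<And>x. x \<in> closure cozero \<Longrightarrow> a x = ratio x" "a ` topspace euclidean \<subseteq> {0..1}"
    using Tietze_extension_closed_real_interval[OF normal closed cont range zero_le_one] by auto
  show ?thesis
  proof (rule that)
    show "continuous_on UNIV a" using a(1) by (simp only: continuous_map_iff_continuous2)
    show "a x \<in> {0..1}" for x using a(3) by (auto simp: image_subset_iff)
    show "a x * s x = p x" for x
    proof (cases "0 < s x")
      case True
      then have "x \<in> cozero" unfolding cozero_def by simp
      then have x: "x \<in> closure cozero" by (rule closure_subset[THEN subsetD])
      have "ratio x * s x = p x" by (rule ratio_at_cozero[OF True ratio_spec(2)[OF x]])
      then show ?thesis using a(2)[OF x] by simp
    next
      case False
      then have "s x = 0" "p x = 0" using p_nonneg[of x] p_le_s[of x] by linarith+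
      then show ?thesis by simp
    qed
  qed
qed

end

lemma sub_Stonean_ratio_extension:
  fixes p s :: "'a::t2_space \<Rightarrow> real"
  assumes "sub_Stonean TYPE('a)" "continuous_on UNIV p" "continuous_on UNIV s"
    and "\<And>x. 0 \<le> p x" "\<And>x. p x \<le> s x"
  obtains a where "continuous_on UNIV a" "\<And>x. a x \<in> {0..1}" "\<And>x. a x * s x = p x"
proof -
  interpret sub_Stonean_ratio p s by unfold_locales (use assms in auto)
  show ?thesis by (rule ratio_extension[OF that])
qed

lemma cnj_mult_mult_self: "cnj z * f * z = complex_of_real ((cmod z)\<^sup>2) * f"
  by (metis complex_norm_square mult.commute mult.left_commute)

lemma pseudo_C_convex_real_combination:
  assumes ps: "pseudo_C_convex S" and "f1 \<in> S" "f2 \<in> S"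
    and a: "continuous_on UNIV a" "\<And>x. a x \<in> {0..1}"
  shows "(\<lambda>x. complex_of_real (a x) * f1 x + complex_of_real (1 - a x) * f2 x) \<in> S"
proof -
  define t1 where "t1 x = complex_of_real (sqrt (a x))" for x
  define t2 where "t2 x = complex_of_real (sqrt (1 - a x))" for x
  have "t1 \<in> CX" unfolding CX_def t1_def by (simp, intro continuous_intros a)
  moreover have "t2 \<in> CX" unfolding CX_def t2_def by (simp, intro continuous_intros a)
  moreover have "\<forall>x. (cmod (t1 x))\<^sup>2 + (cmod (t2 x))\<^sup>2 = 1"
    using a(2) unfolding t1_def t2_def by simp
  ultimately have "(\<lambda>x. cnj (t1 x) * f1 x * t1 x + cnj (t2 x) * f2 x * t2 x) \<in> S"
    using ps assms(2,3) unfolding pseudo_C_convex_def by blast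
  moreover have "(\<lambda>x. cnj (t1 x) * f1 x * t1 x + cnj (t2 x) * f2 x * t2 x) =
      (\<lambda>x. complex_of_real (a x) * f1 x + complex_of_real (1 - a x) * f2 x)"
    using a(2) unfolding cnj_mult_mult_self t1_def t2_def by simp
  ultimately show ?thesis by simp
qed

lemma pseudo_C_convex_weighted_sum:
  fixes S :: "('a::t2_space \<Rightarrow> complex) set" and n :: nat
  assumes ps: "pseudo_C_convex S" and sub: "sub_Stonean TYPE('a)"
    and "\<forall>i<n. f i \<in> S" "\<forall>i<n. continuous_on UNIV (w i)" "\<forall>i<n. \<forall>x. 0 \<le> w i x"
    and "\<forall>x. (\<Sum>i<n. w i x) = 1"
  shows "(\<lambda>x. \<Sum>i<n. complex_of_real (w i x) * f i x) \<in> S"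
  using assms(3-)
proof (induction n arbitrary: f w rule: induct_nat_012)
  case 0
  then show ?case by simp
next
  case 1
  then show ?case by (simp add: fun_eq_iff)
next
  case (ge2 m)
  let ?wsum = "\<lambda>x. w m x + w (Suc m) x"
  have cont: "continuous_on UNIV (w m)" "continuous_on UNIV (w (Suc m))"
    and nonneg: "\<And>x. 0 \<le> w m x" "\<And>x. 0 \<le> w (Suc m) x"
    using ge2.prems(2,3) by auto
  obtain a where a: "continuous_on UNIV a" "\<And>x. a x \<in> {0..1}" "\<And>x. a x * ?wsum x = w m x"
    by (rule sub_Stonean_ratio_extension[OF sub cont(1) continuous_on_add[OF cont]])
      (use nonneg in \<open>auto intro: add_increasing2\<close>)
  define h where "h x = complex_of_real (a x) * f m x + complex_of_real (1 - a x) * f (Suc m) x" for x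
  have "h \<in> S" unfolding h_def using ge2.prems a(1,2)
    by (intro pseudo_C_convex_real_combination[OF ps]) auto
  have merge: "complex_of_real (?wsum x) * h x =
      complex_of_real (w m x) * f m x + complex_of_real (w (Suc m) x) * f (Suc m) x" for x
  proof -
    have "complex_of_real (?wsum x) * h x = complex_of_real (a x * ?wsum x) * f m x
        + complex_of_real ((1 - a x) * ?wsum x) * f (Suc m) x"
      unfolding h_def of_real_mult by (simp add: algebra_simps)
    also have "(1 - a x) * ?wsum x = w (Suc m) x" using a(3)[of x] by (simp add: algebra_simps)
    finally show ?thesis using a(3)[of x] by simp
  qed
  define f' where "f' = f(m := h)"
  define w' where "w' = w(m := ?wsum)"
  have sum_prefix: "(\<Sum>i<m. g (w' i x) (f' i x)) = (\<Sum>i<m. g (w i x) (f i x))"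
    for g :: "real \<Rightarrow> complex \<Rightarrow> 'b::comm_monoid_add" and x
    unfolding f'_def w'_def by (intro sum.cong) auto
  have "(\<lambda>x. \<Sum>i<Suc m. complex_of_real (w' i x) * f' i x) \<in> S"
  proof (rule ge2.IH(2))
    show "\<forall>i<Suc m. f' i \<in> S" using ge2.prems(1) \<open>h \<in> S\<close> unfolding f'_def by auto
    show "\<forall>i<Suc m. continuous_on UNIV (w' i)"
      using ge2.prems(2) unfolding w'_def by (auto intro: continuous_on_add)
    show "\<forall>i<Suc m. \<forall>x. 0 \<le> w' i x"
      using ge2.prems(3) unfolding w'_def by (auto intro: add_nonneg_nonneg)
    show "\<forall>x. (\<Sum>i<Suc m. w' i x) = 1"
      using ge2.prems(4) sum_prefix[of "\<lambda>u v. u"] by (simp add: w'_def add.assoc)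
  qed
  moreover have "(\<lambda>x. \<Sum>i<Suc m. complex_of_real (w' i x) * f' i x) =
      (\<lambda>x. \<Sum>i<Suc (Suc m). complex_of_real (w i x) * f i x)"
  proof
    fix x
    have "(\<Sum>i<Suc m. complex_of_real (w' i x) * f' i x) =
        (\<Sum>i<m. complex_of_real (w i x) * f i x) + complex_of_real (?wsum x) * h x"
      using sum_prefix[of "\<lambda>u v. complex_of_real u * v" x] by (simp add: f'_def w'_def)
    also have "\<dots> = (\<Sum>i<Suc (Suc m). complex_of_real (w i x) * f i x)"
      unfolding merge by (simp add: add.assoc)
    finally show "(\<Sum>i<Suc m. complex_of_real (w' i x) * f' i x) =
        (\<Sum>i<Suc (Suc m). complex_of_real (w i x) * f i x)" .
  qed
  ultimately show ?case by (simp only:)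
qed

lemma C_convex_imp_pseudo_C_convex:
  assumes "C_convex S"
  shows "pseudo_C_convex S"
  unfolding pseudo_C_convex_def
proof (intro allI impI)
  fix f1 f2 t1 t2 :: "'a \<Rightarrow> complex"
  assume H: "f1 \<in> S \<and> f2 \<in> S \<and> t1 \<in> CX \<and> t2 \<in> CX \<and> (\<forall>x. (cmod (t1 x))\<^sup>2 + (cmod (t2 x))\<^sup>2 = 1)"
  define f where "f = (\<lambda>i::nat. if i = 0 then f1 else f2)"
  define t where "t = (\<lambda>i::nat. if i = 0 then t1 else t2)"
  have "(\<forall>i<2. f i \<in> S) \<and> (\<forall>i<2. t i \<in> CX) \<and> (\<forall>x. (\<Sum>i<2. (cmod (t i x))\<^sup>2) = 1)"
    using H unfolding f_def t_def by (simp add: numeral_2_eq_2 less_Suc_eq)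
  then have "(\<lambda>x. \<Sum>i<2. cnj (t i x) * f i x * t i x) \<in> S"
    using assms unfolding C_convex_def by blast
  then show "(\<lambda>x. cnj (t1 x) * f1 x * t1 x + cnj (t2 x) * f2 x * t2 x) \<in> S"
    unfolding f_def t_def by (simp add: numeral_2_eq_2)
qed

lemma pseudo_C_convex_imp_C_convex:
  fixes S :: "('a::t2_space \<Rightarrow> complex) set"
  assumes "sub_Stonean TYPE('a)" and "pseudo_C_convex S"
  shows "C_convex S"
  unfolding C_convex_def
proof (intro allI impI)
  fix n and f t :: "nat \<Rightarrow> 'a \<Rightarrow> complex"
  assume H: "(\<forall>i<n. f i \<in> S) \<and> (\<forall>i<n. t i \<in> CX) \<and> (\<forall>x. (\<Sum>i<n. (cmod (t i x))\<^sup>2) = 1)"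
  moreover have "continuous_on UNIV (\<lambda>x. (cmod (t i x))\<^sup>2)" if "i < n" for i
    using H that unfolding CX_def by (auto intro!: continuous_on_power continuous_on_norm)
  ultimately have "(\<lambda>x. \<Sum>i<n. complex_of_real ((cmod (t i x))\<^sup>2) * f i x) \<in> S"
    by (intro pseudo_C_convex_weighted_sum[OF assms(2,1)]) auto
  then show "(\<lambda>x. \<Sum>i<n. cnj (t i x) * f i x * t i x) \<in> S"
    unfolding cnj_mult_mult_self .
qed

theorem theorem3p19:
  fixes S :: "('a::t2_space \<Rightarrow> complex) set"
  assumes "sub_Stonean TYPE('a)"
    and "S \<subseteq> CX"
  shows "C_convex S \<longleftrightarrow> pseudo_C_convex S"
  using C_convex_imp_pseudo_C_convex pseudo_C_convex_imp_C_convex[OF assms(1)] by blast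

end
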